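(* Let $n\geq 2$, $1\leq k\leq n-1$ and $w\in\mathfrak{S}_n$. The intersection (as sets of positions) of a maximal $k$-ascending section and a maximal $k$-descending section of $w$ is empty or consists of one element. Two distinct maximal $k$-ascending sections of $w$ do not intersect.
   Context: $\mathfrak{S}_n$ is the set of permutations $w=w_1\cdots w_n$ of $\{1,\dots,n\}$. A section of $w$ is a consecutive block $w_sw_{s+1}\cdots w_t$ ($s\le t$), identified with its set of positions $\{s,\dots,t\}$. A section $w_s\cdots w_t$ is a $k$-up if $s<t$ and $w_t-w_s\geq k$, and a $k$-down if $s<t$ and $w_s-w_t\geq k$; a $k$-up/$k$-down "in" $w_a\cdots w_b$ means one $w_s\cdots w_t$ with $a\le s<t\le b$. A section $w_i\cdots w_j$ ($i<j$) is $k$-ascending if $w_i=\min\{w_i,\dots,w_j\}$, $w_j=\max\{w_i,\dots,w_j\}$, $w_j-w_i\geq k$, and there is no $k$-down in $w_i\cdots w_j$. It is $k$-descending if $w_i=\max\{w_i,\dots,w_j\}$, $w_j=\min\{w_i,\dots,w_j\}$, $w_i-w_j\geq k$, and there is no $k$-up in $w_i\cdots w_j$. A $k$-ascending (resp. $k$-descending) section is maximal if it is not contained in another $k$-ascending (resp. $k$-descending) section. *)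

theory Defs
  imports "HOL-Combinatorics.Permutations"
begin

text \<open>A permutation w of {1..n} is a function nat => nat with w permutes {1..n};
  w i is the letter at position i. A section w_s..w_t (s <= t) is encoded by
  the pair (s,t), with position set {s..t}.\<close>

definition is_perm :: "nat \<Rightarrow> (nat \<Rightarrow> nat) \<Rightarrow> bool" where
  "is_perm n w \<longleftrightarrow> w permutes {1..n}"

definition has_kdown_in :: "(nat \<Rightarrow> nat) \<Rightarrow> nat \<Rightarrow> nat \<Rightarrow> nat \<Rightarrow> bool" where
  "has_kdown_in w k a b \<longleftrightarrow>
     (\<exists>s t. a \<le> s \<and> s < t \<and> t \<le> b \<and> int (w s) - int (w t) \<ge> int k)"

definition has_kup_in :: "(nat \<Rightarrow> nat) \<Rightarrow> nat \<Rightarrow> nat \<Rightarrow> nat \<Rightarrow> bool" where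
  "has_kup_in w k a b \<longleftrightarrow>
     (\<exists>s t. a \<le> s \<and> s < t \<and> t \<le> b \<and> int (w t) - int (w s) \<ge> int k)"

definition k_ascending :: "nat \<Rightarrow> (nat \<Rightarrow> nat) \<Rightarrow> nat \<Rightarrow> nat \<Rightarrow> nat \<Rightarrow> bool" where
  "k_ascending n w k i j \<longleftrightarrow>
     1 \<le> i \<and> i < j \<and> j \<le> n \<and>
     w i = Min (w ` {i..j}) \<and> w j = Max (w ` {i..j}) \<and>
     int (w j) - int (w i) \<ge> int k \<and> \<not> has_kdown_in w k i j"

definition k_descending :: "nat \<Rightarrow> (nat \<Rightarrow> nat) \<Rightarrow> nat \<Rightarrow> nat \<Rightarrow> nat \<Rightarrow> bool" where
  "k_descending n w k i j \<longleftrightarrow>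
     1 \<le> i \<and> i < j \<and> j \<le> n \<and>
     w i = Max (w ` {i..j}) \<and> w j = Min (w ` {i..j}) \<and>
     int (w i) - int (w j) \<ge> int k \<and> \<not> has_kup_in w k i j"

definition max_k_ascending :: "nat \<Rightarrow> (nat \<Rightarrow> nat) \<Rightarrow> nat \<Rightarrow> nat \<Rightarrow> nat \<Rightarrow> bool" where
  "max_k_ascending n w k i j \<longleftrightarrow> k_ascending n w k i j \<and>
     \<not> (\<exists>i' j'. k_ascending n w k i' j' \<and> {i..j} \<subset> {i'..j'})"

definition max_k_descending :: "nat \<Rightarrow> (nat \<Rightarrow> nat) \<Rightarrow> nat \<Rightarrow> nat \<Rightarrow> nat \<Rightarrow> bool" where
  "max_k_descending n w k i j \<longleftrightarrow> k_descending n w k i j \<and>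
     \<not> (\<exists>i' j'. k_descending n w k i' j' \<and> {i..j} \<subset> {i'..j'})"

end

theory Submission
  imports Defs
begin

text \<open>A k-ascending section cannot contain a k-descending one, since the endpoints of the
  latter would form a k-down inside the former (and symmetrically). If the two sections merely
  overlap, a common position is both the maximum of the ascending section and the maximum of
  the descending one (or both minima), so by injectivity the overlap is a single position.
  Two overlapping k-ascending sections merge into a single k-ascending section, which
  contradicts the maximality of at least one of them.\<close>

lemma k_ascendingD:
  assumes "k_ascending n w k i j"
  shows "1 \<le> i" "i < j" "j \<le> n"
    and "\<And>x. i \<le> x \<Longrightarrow> x \<le> j \<Longrightarrow> w i \<le> w x"
    and "\<And>x. i \<le> x \<Longrightarrow> x \<le> j \<Longrightarrow> w x \<le> w j"
    and "int (w i) + int k \<le> int (w j)"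
  using assms unfolding k_ascending_def by (auto intro!: Min_le Max_ge)

lemma k_ascending_no_kdown:
  assumes "k_ascending n w k i j" "i \<le> s" "s < t" "t \<le> j"
  shows "int (w s) < int (w t) + int k"
  using assms unfolding k_ascending_def has_kdown_in_def by force

lemma k_descendingD:
  assumes "k_descending n w k i j"
  shows "1 \<le> i" "i < j" "j \<le> n"
    and "\<And>x. i \<le> x \<Longrightarrow> x \<le> j \<Longrightarrow> w x \<le> w i"
    and "\<And>x. i \<le> x \<Longrightarrow> x \<le> j \<Longrightarrow> w j \<le> w x"
    and "int (w j) + int k \<le> int (w i)"
  using assms unfolding k_descending_def by (auto intro!: Min_le Max_ge)

lemma k_descending_no_kup:
  assumes "k_descending n w k i j" "i \<le> s" "s < t" "t \<le> j"
  shows "int (w t) < int (w s) + int k"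
  using assms unfolding k_descending_def has_kup_in_def by force

lemma k_ascending_not_contains_k_descending:
  assumes "k_ascending n w k a b" "k_descending n w k c d" "a \<le> c" "d \<le> b"
  shows False
  using k_ascending_no_kdown[OF assms(1) \<open>a \<le> c\<close> k_descendingD(2)[OF assms(2)] \<open>d \<le> b\<close>]
    k_descendingD(6)[OF assms(2)] by linarith

lemma k_descending_not_contains_k_ascending:
  assumes "k_descending n w k c d" "k_ascending n w k a b" "c \<le> a" "b \<le> d"
  shows False
  using k_descending_no_kup[OF assms(1) \<open>c \<le> a\<close> k_ascendingD(2)[OF assms(2)] \<open>b \<le> d\<close>]
    k_ascendingD(6)[OF assms(2)] by linarith

lemma k_ascending_before_k_descending:
  assumes "inj w" "k_ascending n w k a b" "k_descending n w k c d" "a \<le> c" "b \<le> d"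
  shows "b \<le> c"
proof (rule ccontr)
  assume "\<not> b \<le> c"
  then have "w c \<le> w b" "w b \<le> w c"
    using k_ascendingD(5)[OF assms(2)] k_descendingD(4)[OF assms(3)] assms(4,5) by auto
  then have "b = c" using \<open>inj w\<close> by (simp add: inj_eq)
  with \<open>\<not> b \<le> c\<close> show False by simp
qed

lemma k_descending_before_k_ascending:
  assumes "inj w" "k_descending n w k c d" "k_ascending n w k a b" "c \<le> a" "d \<le> b"
  shows "d \<le> a"
proof (rule ccontr)
  assume "\<not> d \<le> a"
  then have "w a \<le> w d" "w d \<le> w a"
    using k_ascendingD(4)[OF assms(3)] k_descendingD(5)[OF assms(2)] assms(4,5) by auto
  then have "a = d" using \<open>inj w\<close> by (simp add: inj_eq)
  with \<open>\<not> d \<le> a\<close> show False by simp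
qed

lemma card_inter_k_ascending_k_descending:
  assumes "inj w" and A: "k_ascending n w k a b" and D: "k_descending n w k c d"
  shows "card ({a..b} \<inter> {c..d}) \<le> 1"
proof (cases "a \<le> c")
  case True
  then have "b \<le> d"
    using k_ascending_not_contains_k_descending[OF A D] by fastforce
  with True have "{a..b} \<inter> {c..d} = {c..b}" and "b \<le> c"
    using k_ascending_before_k_descending[OF assms] by auto
  then show ?thesis by simp
next
  case False
  then have "d \<le> b"
    using k_descending_not_contains_k_ascending[OF D A] by fastforce
  with False have "{a..b} \<inter> {c..d} = {a..d}" and "d \<le> a"
    using k_descending_before_k_ascending[OF \<open>inj w\<close> D A] by auto
  then show ?thesis by simp
qed

lemma k_ascending_merge:
  assumes A: "k_ascending n w k a b" and C: "k_ascending n w k c d"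
    and "a \<le> c" "c \<le> b" "b \<le> d"
  shows "k_ascending n w k a d"
proof -
  note a = k_ascendingD[OF A] and c = k_ascendingD[OF C]
  have min: "w a \<le> w x" if "a \<le> x" "x \<le> d" for x
    using a(4)[of x] a(4)[of c] c(4)[of x] that assms(3-5) by (cases "x \<le> b") auto
  have max: "w x \<le> w d" if "a \<le> x" "x \<le> d" for x
    using c(5)[of x] c(5)[of b] a(5)[of x] that assms(3-5) by (cases "c \<le> x") auto
  have no_kdown: "int (w s) < int (w t) + int k" if "a \<le> s" "s < t" "t \<le> d" for s t
  proof -
    consider "t \<le> b" | "c \<le> s" | "s < c" "b < t" by linarith
    then show ?thesis
    proof cases
      case 3
      then have "w s \<le> w b" using a(5) that \<open>c \<le> b\<close> by simp
      moreover have "int (w b) < int (w t) + int k"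
        using k_ascending_no_kdown[OF C \<open>c \<le> b\<close> \<open>b < t\<close>] that by simp
      ultimately show ?thesis by linarith
    qed (use k_ascending_no_kdown[OF A] k_ascending_no_kdown[OF C] that in auto)
  qed
  have "a < d" using a(2) \<open>b \<le> d\<close> by simp
  then have "w a = Min (w ` {a..d})" "w d = Max (w ` {a..d})"
    using min max by (auto intro!: Min_eqI[symmetric] Max_eqI[symmetric])
  moreover have "int (w a) + int k \<le> int (w d)"
    using a(6) max[of b] a(2) \<open>b \<le> d\<close> by simp
  ultimately show ?thesis
    using a(1,3) c(3) \<open>a < d\<close> no_kdown
    unfolding k_ascending_def has_kdown_in_def by force
qed

lemma max_k_ascending_disjoint_if_le:
  assumes A: "max_k_ascending n w k a b" and C: "max_k_ascending n w k c d"
    and "(a, b) \<noteq> (c, d)" "a \<le> c"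
  shows "{a..b} \<inter> {c..d} = {}"
proof (rule ccontr)
  assume "{a..b} \<inter> {c..d} \<noteq> {}"
  then have "c \<le> b" by auto
  have A': "k_ascending n w k a b" and C': "k_ascending n w k c d"
    using A C unfolding max_k_ascending_def by auto
  have "\<not> {c..d} \<subset> {a..b}" using C A' unfolding max_k_ascending_def by blast
  then have "b < d"
    using assms(3,4) k_ascendingD(2)[OF C'] by auto
  then have "{a..b} \<subset> {a..d}" using k_ascendingD(2)[OF A'] by auto
  moreover have "k_ascending n w k a d"
    using k_ascending_merge[OF A' C' \<open>a \<le> c\<close> \<open>c \<le> b\<close>] \<open>b < d\<close> by simp
  ultimately show False using A unfolding max_k_ascending_def by blast
qed

lemma max_k_ascending_disjoint:
  assumes "max_k_ascending n w k a b" "max_k_ascending n w k c d" "(a, b) \<noteq> (c, d)"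
  shows "{a..b} \<inter> {c..d} = {}"
proof (cases "a \<le> c")
  case True
  with assms show ?thesis by (rule max_k_ascending_disjoint_if_le)
next
  case False
  with assms max_k_ascending_disjoint_if_le[of n w k c d a b] show ?thesis by auto
qed

theorem lemma2p6:
  fixes n k :: nat and w :: "nat \<Rightarrow> nat"
  assumes "n \<ge> 2" and "1 \<le> k" and "k \<le> n - 1" and "is_perm n w"
  shows "(\<forall>a b c d. max_k_ascending n w k a b \<and> max_k_descending n w k c d
            \<longrightarrow> card ({a..b} \<inter> {c..d}) \<le> 1)
       \<and> (\<forall>a b c d. max_k_ascending n w k a b \<and> max_k_ascending n w k c d
            \<and> (a, b) \<noteq> (c, d) \<longrightarrow> {a..b} \<inter> {c..d} = {})"
proof (intro conjI allI impI)
  have "inj w" using \<open>is_perm n w\<close> unfolding is_perm_def by (rule permutes_inj)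
  fix a b c d
  assume "max_k_ascending n w k a b \<and> max_k_descending n w k c d"
  with \<open>inj w\<close> show "card ({a..b} \<inter> {c..d}) \<le> 1"
    unfolding max_k_ascending_def max_k_descending_def
    by (blast intro: card_inter_k_ascending_k_descending)
next
  fix a b c d
  assume "max_k_ascending n w k a b \<and> max_k_ascending n w k c d \<and> (a, b) \<noteq> (c, d)"
  then show "{a..b} \<inter> {c..d} = {}" using max_k_ascending_disjoint by blast
qed

end
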